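(* Let $\mathcal{G}=(\mathcal{V},\mathcal{E})$ be a directed graph with $\mathcal{V}=[n]$, and consider the discrete-time networked SIR dynamics $$s_i[k+1]=s_i[k]-h s_i[k]\beta\sum_{j\in\bar{\mathcal{N}}_i}a_{ij}x_j[k],\quad x_i[k+1]=(1-h\delta)x_i[k]+h s_i[k]\beta\sum_{j\in\bar{\mathcal{N}}_i}a_{ij}x_j[k],\quad r_i[k+1]=r_i[k]+h\delta x_i[k]$$ for all $i\in\mathcal{V}$, $k\in\mathbb{Z}_{\ge0}$. Suppose that (i) for all $i\in\mathcal{V}$, $s_i[0]\in(0,1]$, $x_i[0]\in[0,1)$, $r_i[0]=0$ and $s_i[0]+x_i[0]=1$; and (ii) $h,\beta,\delta>0$ with $h\delta<1$, $a_{ij}>0$ for all $i\neq j$ with $(j,i)\in\mathcal{E}$, and $h\beta\sum_{j\in\bar{\mathcal{N}}_i}a_{ij}<1$ for all $i\in\mathcal{V}$. Then for every $i\in\mathcal{V}$ (with $k\in\mathbb{Z}_{\ge0}$): (a) $s_i[k]>0$ for all $k\ge0$; (b) if $d_i\neq+\infty$, then $x_i[k]=0$ for all $k<d_i$ and $x_i[k]\in(0,1)$ for all $k\ge d_i$; (c) if $d_i\neq+\infty$, then $r_i[k]=0$ for all $k\le d_i$ and $r_i[k]\in(0,1)$ for all $k>d_i$; (d) if $i\in\mathcal{S}_H$ and $d_i=+\infty$, then $x_i[k]=0$ and $r_i[k]=0$ for all $k\ge0$.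
   Context: A directed edge from node $j$ to node $i$ is written $(j,i)$; $\mathcal{E}$ may contain self-loops. $\mathcal{N}_i=\{j:(j,i)\in\mathcal{E}\}$ and $\bar{\mathcal{N}}_i=\mathcal{N}_i\cup\{i\}$. The weights satisfy $a_{ij}\ge0$, with $a_{ij}$ the weight associated with edge $(j,i)$. $s_i[k],x_i[k],r_i[k]$ are the susceptible, infected and recovered proportions at node $i$ and time $k$. A directed path of length $t$ from $i_0$ to $i_t$ is a sequence of edges $(i_0,i_1),\dots,(i_{t-1},i_t)$; for distinct $i,j$ with a path from $i$ to $j$, $d_{ij}$ is the shortest length of such a path. Define $\mathcal{S}_I=\{i\in\mathcal{V}:x_i[0]>0\}$ and $\mathcal{S}_H=\{i\in\mathcal{V}:x_i[0]=0\}$. For $i\in\mathcal{S}_I$, $d_i=0$; for $i\in\mathcal{S}_H$, $d_i=\min_{j\in\mathcal{S}_I}d_{ji}$ (taken over $j$ having a path to $i$), and $d_i=+\infty$ if no $j\in\mathcal{S}_I$ has a path to $i$. *)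

theory Defs
  imports Complex_Main "HOL-Library.Extended_Nat"
begin

definition walk :: "(nat \<times> nat) set \<Rightarrow> nat \<Rightarrow> nat \<Rightarrow> nat \<Rightarrow> bool" where
  "walk E u v t \<longleftrightarrow> (\<exists>p::nat \<Rightarrow> nat. p 0 = u \<and> p t = v \<and> (\<forall>m<t. (p m, p (Suc m)) \<in> E))"

definition nbhd_bar :: "(nat \<times> nat) set \<Rightarrow> nat \<Rightarrow> nat set" where
  "nbhd_bar E i = {j. (j, i) \<in> E} \<union> {i}"

definition inf_dist :: "nat set \<Rightarrow> (nat \<times> nat) set \<Rightarrow> (nat \<Rightarrow> real) \<Rightarrow> nat \<Rightarrow> enat" where
  "inf_dist V E x0 i =
    (if x0 i > 0 then 0
     else if (\<exists>j\<in>V. x0 j > 0 \<and> j \<noteq> i \<and> (\<exists>t>0. walk E j i t))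
       then enat (LEAST t. t > 0 \<and> (\<exists>j\<in>V. x0 j > 0 \<and> j \<noteq> i \<and> walk E j i t))
       else \<infinity>)"

end

theory Submission
  imports Defs
begin

text \<open>The state stays in the simplex: \<open>h \<beta> \<Sum>\<^sub>j a\<^sub>i\<^sub>j x\<^sub>j < 1\<close> keeps \<open>s\<close> positive,
  \<open>h \<delta> < 1\<close> keeps \<open>x\<close> nonnegative, and \<open>s + x + r = 1\<close> is conserved. Moreover \<open>x\<^sub>i[k] > 0\<close>
  exactly when some initially infected node reaches \<open>i\<close> by a walk of length at most \<open>k\<close>
  (length 0 accounting for \<open>d\<^sub>i = 0\<close>): infection persists because \<open>h \<delta> < 1\<close>, crosses every
  edge in one step because \<open>a\<^sub>i\<^sub>j > 0\<close>, and can only arrive through an in-neighbour that is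
  already infected. Finally \<open>r\<^sub>i[k] = h \<delta> \<Sum>\<^sub>m\<^sub><\<^sub>k x\<^sub>i[m]\<close>, so recovery starts one step after
  infection.\<close>

lemma walk_0_iff: "walk E u v 0 \<longleftrightarrow> u = v"
  unfolding walk_def by auto

lemma walk_Suc_iff: "walk E u w (Suc t) \<longleftrightarrow> (\<exists>v. walk E u v t \<and> (v, w) \<in> E)"
proof
  assume "walk E u w (Suc t)"
  then obtain p where "p 0 = u" "p (Suc t) = w" "\<forall>m<Suc t. (p m, p (Suc m)) \<in> E"
    unfolding walk_def by blast
  then show "\<exists>v. walk E u v t \<and> (v, w) \<in> E"
    unfolding walk_def by (intro exI[of _ "p t"]) auto
next
  assume "\<exists>v. walk E u v t \<and> (v, w) \<in> E"
  then obtain p where p: "p 0 = u" "(p t, w) \<in> E" "\<forall>m<t. (p m, p (Suc m)) \<in> E"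
    unfolding walk_def by blast
  show "walk E u w (Suc t)"
    unfolding walk_def by (rule exI[of _ "p(Suc t := w)"]) (use p in \<open>auto simp: less_Suc_eq\<close>)
qed

lemma inf_dist_le_enat_iff:
  assumes "i \<in> V"
  shows "inf_dist V E x0 i \<le> enat k \<longleftrightarrow> (\<exists>j\<in>V. x0 j > 0 \<and> (\<exists>t\<le>k. walk E j i t))"
proof (cases "x0 i > 0")
  case True
  moreover have "walk E i i 0"
    by (simp add: walk_0_iff)
  ultimately show ?thesis
    using assms unfolding inf_dist_def by (force simp: zero_enat_def[symmetric])
next
  case False
  define P where "P t \<longleftrightarrow> t > 0 \<and> (\<exists>j\<in>V. x0 j > 0 \<and> j \<noteq> i \<and> walk E j i t)" for t
  have seeded_walk_iff: "(\<exists>j\<in>V. x0 j > 0 \<and> walk E j i t) \<longleftrightarrow> P t" for t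
    using False unfolding P_def by (metis gr0I walk_0_iff)
  show ?thesis
  proof (cases "\<exists>t. P t")
    case True
    then have dist_eq: "inf_dist V E x0 i = enat (Least P)"
      using False unfolding inf_dist_def P_def by auto
    show ?thesis
    proof
      assume "inf_dist V E x0 i \<le> enat k"
      then have "Least P \<le> k"
        using dist_eq by simp
      then show "\<exists>j\<in>V. x0 j > 0 \<and> (\<exists>t\<le>k. walk E j i t)"
        using LeastI_ex[OF True] seeded_walk_iff by blast
    next
      assume "\<exists>j\<in>V. x0 j > 0 \<and> (\<exists>t\<le>k. walk E j i t)"
      then obtain t where "P t" "t \<le> k"
        using seeded_walk_iff by blast
      then show "inf_dist V E x0 i \<le> enat k"
        using dist_eq Least_le[of P t] by simp
    qed
  next
    case False
    then have "\<not> (\<exists>j\<in>V. x0 j > 0 \<and> j \<noteq> i \<and> (\<exists>t>0. walk E j i t))"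
      unfolding P_def by blast
    then have "inf_dist V E x0 i = \<infinity>"
      using \<open>\<not> x0 i > 0\<close> unfolding inf_dist_def by simp
    then show ?thesis
      using seeded_walk_iff False by auto
  qed
qed

locale sir_network =
  fixes V :: "nat set" and E :: "(nat \<times> nat) set" and a :: "nat \<Rightarrow> nat \<Rightarrow> real"
    and s x r :: "nat \<Rightarrow> nat \<Rightarrow> real" and h \<beta> \<delta> :: real
  assumes finite_V: "finite V"
    and E_sub: "E \<subseteq> V \<times> V"
    and a_nonneg: "\<And>i j. a i j \<ge> 0"
    and a_pos: "\<And>i j. i \<noteq> j \<Longrightarrow> (j, i) \<in> E \<Longrightarrow> a i j > 0"
    and s_step: "\<And>i k. i \<in> V \<Longrightarrow>
       s (Suc k) i = s k i - h * s k i * \<beta> * (\<Sum>j\<in>nbhd_bar E i. a i j * x k j)"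
    and x_step: "\<And>i k. i \<in> V \<Longrightarrow>
       x (Suc k) i = (1 - h * \<delta>) * x k i + h * s k i * \<beta> * (\<Sum>j\<in>nbhd_bar E i. a i j * x k j)"
    and r_step: "\<And>i k. i \<in> V \<Longrightarrow> r (Suc k) i = r k i + h * \<delta> * x k i"
    and s0_pos: "\<And>i. i \<in> V \<Longrightarrow> s 0 i > 0"
    and x0_nonneg: "\<And>i. i \<in> V \<Longrightarrow> x 0 i \<ge> 0"
    and r0_eq_0: "\<And>i. i \<in> V \<Longrightarrow> r 0 i = 0"
    and s0_plus_x0: "\<And>i. i \<in> V \<Longrightarrow> s 0 i + x 0 i = 1"
    and h_pos: "h > 0" and beta_pos: "\<beta> > 0" and delta_pos: "\<delta> > 0"
    and hdelta: "h * \<delta> < 1"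
    and hbeta: "\<And>i. i \<in> V \<Longrightarrow> h * \<beta> * (\<Sum>j\<in>nbhd_bar E i. a i j) < 1"
begin

definition pressure :: "nat \<Rightarrow> nat \<Rightarrow> real" where
  "pressure k i = (\<Sum>j\<in>nbhd_bar E i. a i j * x k j)"

lemma s_Suc: "i \<in> V \<Longrightarrow> s (Suc k) i = s k i * (1 - h * \<beta> * pressure k i)"
  using s_step unfolding pressure_def by (simp add: algebra_simps)

lemma x_Suc: "i \<in> V \<Longrightarrow> x (Suc k) i = (1 - h * \<delta>) * x k i + h * \<beta> * s k i * pressure k i"
  using x_step unfolding pressure_def by (simp add: algebra_simps)

lemma nbhd_bar_subset: "i \<in> V \<Longrightarrow> nbhd_bar E i \<subseteq> V"
  using E_sub unfolding nbhd_bar_def by auto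

lemma finite_nbhd_bar: "i \<in> V \<Longrightarrow> finite (nbhd_bar E i)"
  using nbhd_bar_subset finite_V by (rule finite_subset)

lemma pressure_bounds:
  assumes x_bounds: "\<And>j. j \<in> V \<Longrightarrow> 0 \<le> x k j \<and> x k j \<le> 1" and "i \<in> V"
  shows "0 \<le> pressure k i" and "h * \<beta> * pressure k i < 1"
proof -
  have terms: "0 \<le> a i j * x k j \<and> a i j * x k j \<le> a i j" if "j \<in> nbhd_bar E i" for j
    using x_bounds[of j] nbhd_bar_subset[OF \<open>i \<in> V\<close>] that a_nonneg[of i j]
    by (auto simp: mult_left_le)
  then show "0 \<le> pressure k i"
    unfolding pressure_def by (simp add: sum_nonneg)
  have "pressure k i \<le> (\<Sum>j\<in>nbhd_bar E i. a i j)"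
    unfolding pressure_def using terms by (simp add: sum_mono)
  then have "h * \<beta> * pressure k i \<le> h * \<beta> * (\<Sum>j\<in>nbhd_bar E i. a i j)"
    using h_pos beta_pos by (simp add: mult_left_mono)
  then show "h * \<beta> * pressure k i < 1"
    using hbeta[OF \<open>i \<in> V\<close>] by linarith
qed

lemma compartments:
  assumes "i \<in> V"
  shows "0 < s k i \<and> 0 \<le> x k i \<and> 0 \<le> r k i \<and> s k i + x k i + r k i = 1"
  using assms
proof (induction k arbitrary: i)
  case 0
  then show ?case using s0_pos x0_nonneg r0_eq_0 s0_plus_x0 by simp
next
  case (Suc k)
  have "0 \<le> x k j \<and> x k j \<le> 1" if "j \<in> V" for j
    using Suc.IH[OF that] by linarith
  note pressure_k = pressure_bounds[OF this Suc.prems]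
  have IH: "0 < s k i" "0 \<le> x k i" "0 \<le> r k i" "s k i + x k i + r k i = 1"
    using Suc.IH[OF Suc.prems] by auto
  have "0 < s (Suc k) i"
    using s_Suc[OF Suc.prems] IH pressure_k by simp
  moreover have "0 \<le> x (Suc k) i"
    using x_Suc[OF Suc.prems] IH pressure_k hdelta h_pos beta_pos by simp
  moreover have "0 \<le> r (Suc k) i"
    using r_step[OF Suc.prems] IH h_pos delta_pos by simp
  moreover have "s (Suc k) i + x (Suc k) i + r (Suc k) i = 1"
    using s_Suc[OF Suc.prems] x_Suc[OF Suc.prems] r_step[OF Suc.prems] IH(4)
    by (simp add: algebra_simps)
  ultimately show ?case by blast
qed

lemma s_pos: "i \<in> V \<Longrightarrow> 0 < s k i"
  and x_nonneg: "i \<in> V \<Longrightarrow> 0 \<le> x k i"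
  and r_nonneg: "i \<in> V \<Longrightarrow> 0 \<le> r k i"
  and x_less_1: "i \<in> V \<Longrightarrow> x k i < 1"
  and r_less_1: "i \<in> V \<Longrightarrow> r k i < 1"
  using compartments[of i k] by auto

lemma pressure_nonneg: "i \<in> V \<Longrightarrow> 0 \<le> pressure k i"
  using pressure_bounds x_nonneg x_less_1 by (meson less_imp_le)

lemma x_pos_Suc:
  assumes "i \<in> V" and "0 < x k i"
  shows "0 < x (Suc k) i"
proof -
  have "0 \<le> h * \<beta> * s k i * pressure k i"
    using h_pos beta_pos s_pos[OF assms(1), of k] pressure_nonneg[OF assms(1), of k] by simp
  moreover have "0 < (1 - h * \<delta>) * x k i"
    using hdelta assms(2) by simp
  ultimately show ?thesis
    using x_Suc[OF assms(1), of k] by linarith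
qed

lemma x_pos_mono:
  assumes "i \<in> V" and "0 < x k i" and "k \<le> l"
  shows "0 < x l i"
  using assms(3) by (induction l rule: dec_induct) (auto intro: x_pos_Suc assms)

lemma x_pos_along_edge:
  assumes "(j, i) \<in> E" and "0 < x k j"
  shows "0 < x (Suc k) i"
proof (cases "i = j")
  case True
  then show ?thesis using assms E_sub x_pos_Suc by blast
next
  case False
  have "i \<in> V" "j \<in> nbhd_bar E i"
    using assms(1) E_sub unfolding nbhd_bar_def by auto
  have "0 < a i j * x k j"
    using a_pos[OF False assms(1)] assms(2) by simp
  also have "\<dots> \<le> pressure k i"
    unfolding pressure_def
    by (rule member_le_sum[OF \<open>j \<in> nbhd_bar E i\<close> _ finite_nbhd_bar[OF \<open>i \<in> V\<close>]])
      (use a_nonneg x_nonneg nbhd_bar_subset[OF \<open>i \<in> V\<close>] in \<open>auto intro: mult_nonneg_nonneg\<close>)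
  finally have "0 < h * \<beta> * s k i * pressure k i"
    using h_pos beta_pos s_pos[OF \<open>i \<in> V\<close>] by simp
  moreover have "0 \<le> (1 - h * \<delta>) * x k i"
    using hdelta x_nonneg[OF \<open>i \<in> V\<close>] by simp
  ultimately show ?thesis
    using x_Suc[OF \<open>i \<in> V\<close>, of k] by linarith
qed

lemma x_pos_along_walk: "walk E j i t \<Longrightarrow> 0 < x 0 j \<Longrightarrow> 0 < x t i"
proof (induction t arbitrary: i)
  case 0
  then show ?case by (simp add: walk_0_iff)
next
  case (Suc t)
  then obtain v where "walk E j v t" "(v, i) \<in> E"
    by (auto simp: walk_Suc_iff)
  then show ?case using Suc.IH Suc.prems(2) x_pos_along_edge by blast
qed

lemma x_pos_imp_seeded_walk:
  assumes "i \<in> V" and "0 < x k i"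
  shows "\<exists>j\<in>V. 0 < x 0 j \<and> (\<exists>t\<le>k. walk E j i t)"
  using assms
proof (induction k arbitrary: i)
  case 0
  then show ?case by (auto simp: walk_0_iff)
next
  case (Suc k)
  show ?case
  proof (cases "0 < x k i")
    case True
    then show ?thesis using Suc.IH[OF Suc.prems(1)] le_SucI by blast
  next
    case False
    then have "x k i = 0"
      using x_nonneg[OF Suc.prems(1), of k] by linarith
    then have "pressure k i \<noteq> 0"
      using x_Suc[OF Suc.prems(1)] Suc.prems(2) by auto
    then obtain j where j: "j \<in> nbhd_bar E i" "a i j * x k j \<noteq> 0"
      unfolding pressure_def by (meson sum.neutral)
    then have "j \<in> V"
      using nbhd_bar_subset[OF Suc.prems(1)] by auto
    have "0 < x k j"
      using j(2) x_nonneg[OF \<open>j \<in> V\<close>, of k] by (simp add: order_less_le)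
    then have "(j, i) \<in> E"
      using j(1) \<open>x k i = 0\<close> unfolding nbhd_bar_def by auto
    obtain j0 t where "j0 \<in> V" "0 < x 0 j0" "t \<le> k" "walk E j0 j t"
      using Suc.IH[OF \<open>j \<in> V\<close> \<open>0 < x k j\<close>] by blast
    moreover from this(4) have "walk E j0 i (Suc t)"
      using \<open>(j, i) \<in> E\<close> walk_Suc_iff by blast
    ultimately show ?thesis
      by (meson Suc_le_mono)
  qed
qed

theorem x_pos_iff_inf_dist_le:
  assumes "i \<in> V"
  shows "0 < x k i \<longleftrightarrow> inf_dist V E (x 0) i \<le> enat k"
  using x_pos_imp_seeded_walk[OF assms] x_pos_along_walk x_pos_mono[OF assms]
  unfolding inf_dist_le_enat_iff[OF assms] by blast

lemma r_eq_sum: "i \<in> V \<Longrightarrow> r k i = h * \<delta> * (\<Sum>m<k. x m i)"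
  by (induction k) (simp_all add: r0_eq_0 r_step algebra_simps)

lemma r_pos_iff:
  assumes "i \<in> V"
  shows "0 < r k i \<longleftrightarrow> (\<exists>m<k. 0 < x m i)"
proof -
  have "0 < r k i \<longleftrightarrow> (\<Sum>m<k. x m i) \<noteq> 0"
    using r_eq_sum[OF assms] h_pos delta_pos x_nonneg[OF assms]
    by (simp add: sum_nonneg order_less_le zero_less_mult_iff)
  also have "\<dots> \<longleftrightarrow> (\<exists>m<k. 0 < x m i)"
    using x_nonneg[OF assms] by (auto simp: sum_nonneg_eq_0_iff order_less_le)
  finally show ?thesis .
qed

theorem r_pos_iff_inf_dist_less:
  assumes "i \<in> V"
  shows "0 < r k i \<longleftrightarrow> inf_dist V E (x 0) i < enat k"
  unfolding r_pos_iff[OF assms] x_pos_iff_inf_dist_le[OF assms]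
  by (cases "inf_dist V E (x 0) i") auto

end

theorem lemma1:
  fixes n :: nat and E :: "(nat \<times> nat) set" and a :: "nat \<Rightarrow> nat \<Rightarrow> real"
    and s x r :: "nat \<Rightarrow> nat \<Rightarrow> real" and h \<beta> \<delta> :: real
  assumes E_sub: "E \<subseteq> {1..n} \<times> {1..n}"
    and a_nonneg: "\<And>i j. a i j \<ge> 0"
    and s_step: "\<And>i k. i \<in> {1..n} \<Longrightarrow>
       s (Suc k) i = s k i - h * s k i * \<beta> * (\<Sum>j\<in>nbhd_bar E i. a i j * x k j)"
    and x_step: "\<And>i k. i \<in> {1..n} \<Longrightarrow>
       x (Suc k) i = (1 - h * \<delta>) * x k i + h * s k i * \<beta> * (\<Sum>j\<in>nbhd_bar E i. a i j * x k j)"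
    and r_step: "\<And>i k. i \<in> {1..n} \<Longrightarrow> r (Suc k) i = r k i + h * \<delta> * x k i"
    and init: "\<And>i. i \<in> {1..n} \<Longrightarrow>
       0 < s 0 i \<and> s 0 i \<le> 1 \<and> 0 \<le> x 0 i \<and> x 0 i < 1 \<and> r 0 i = 0 \<and> s 0 i + x 0 i = 1"
    and h_pos: "h > 0" and beta_pos: "\<beta> > 0" and delta_pos: "\<delta> > 0"
    and hdelta: "h * \<delta> < 1"
    and a_pos: "\<And>i j. i \<noteq> j \<Longrightarrow> (j, i) \<in> E \<Longrightarrow> a i j > 0"
    and hbeta: "\<And>i. i \<in> {1..n} \<Longrightarrow> h * \<beta> * (\<Sum>j\<in>nbhd_bar E i. a i j) < 1"
    and i_in: "i \<in> {1..n}"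
  shows "(\<forall>k. s k i > 0)
    \<and> (inf_dist {1..n} E (x 0) i \<noteq> \<infinity> \<longrightarrow>
         (\<forall>k. (enat k < inf_dist {1..n} E (x 0) i \<longrightarrow> x k i = 0) \<and>
              (enat k \<ge> inf_dist {1..n} E (x 0) i \<longrightarrow> 0 < x k i \<and> x k i < 1)))
    \<and> (inf_dist {1..n} E (x 0) i \<noteq> \<infinity> \<longrightarrow>
         (\<forall>k. (enat k \<le> inf_dist {1..n} E (x 0) i \<longrightarrow> r k i = 0) \<and>
              (enat k > inf_dist {1..n} E (x 0) i \<longrightarrow> 0 < r k i \<and> r k i < 1)))
    \<and> (x 0 i = 0 \<and> inf_dist {1..n} E (x 0) i = \<infinity> \<longrightarrow> (\<forall>k. x k i = 0 \<and> r k i = 0))"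
proof -
  interpret sir_network "{1..n}" E a s x r h \<beta> \<delta>
    using assms by unfold_locales auto
  have x_zero_iff: "x k i = 0 \<longleftrightarrow> \<not> inf_dist {1..n} E (x 0) i \<le> enat k" for k
    using x_pos_iff_inf_dist_le[OF i_in] x_nonneg[OF i_in] by (metis order_less_le)
  have r_zero_iff: "r k i = 0 \<longleftrightarrow> \<not> inf_dist {1..n} E (x 0) i < enat k" for k
    using r_pos_iff_inf_dist_less[OF i_in] r_nonneg[OF i_in] by (metis order_less_le)
  show ?thesis
    using s_pos[OF i_in] x_less_1[OF i_in] r_less_1[OF i_in]
      x_pos_iff_inf_dist_le[OF i_in] r_pos_iff_inf_dist_less[OF i_in] x_zero_iff r_zero_iff
    by (auto simp: not_le not_less)
qed

end
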